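(* Let $k>0$ and consider the case $\Lambda=1$. The minimum of $(\Delta\bm{x})^2$ over all unit vectors of the $3$-dimensional space $\mathcal{H}_1$ equals $\frac{7}{32}$, and it is attained at $$\underline{\bm{\chi}}=\frac{\sqrt5}{4}\left(\psi_{-1}+\psi_1\right)+\sqrt{\tfrac38}\,\psi_0 .$$
   Context: (Fuzzy circle $S^1_\Lambda$ with $\Lambda=1$.) $\mathcal{H}_1$ has orthonormal basis $\psi_{-1},\psi_0,\psi_1$. Operators: $x_+\psi_n=b_{n+1}\psi_{n+1}$, $x_-\psi_n=b_n\psi_{n-1}$ where $b_n=\sqrt{1+n(n-1)/k}$ for $n\in\{0,1\}$ and $b_n=0$ otherwise (so $b_0=b_1=1$, $b_{-1}=b_2=0$); $x_1=(x_++x_-)/2$, $x_2=(x_+-x_-)/(2i)$, $\bm{x}^2=x_1^2+x_2^2$. For a unit vector $\bm{\chi}$, $\langle A\rangle=\langle\bm{\chi},A\bm{\chi}\rangle$ and $(\Delta\bm{x})^2=\langle\bm{x}^2\rangle-\langle x_1\rangle^2-\langle x_2\rangle^2$. *)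

theory Defs
  imports Complex_Main
begin

text \<open>Fuzzy circle with Lambda = 1. A vector of H_1 is represented by its coefficient
function chi :: int => complex w.r.t. the orthonormal basis psi_n (n in {-1,0,1});
chi n = <psi_n, chi>.\<close>

definition Hidx :: "int set" where "Hidx = {-1, 0, 1}"

definition inH1 :: "(int \<Rightarrow> complex) \<Rightarrow> bool" where
  "inH1 \<chi> \<longleftrightarrow> (\<forall>n. n \<notin> Hidx \<longrightarrow> \<chi> n = 0)"

definition inner_H :: "(int \<Rightarrow> complex) \<Rightarrow> (int \<Rightarrow> complex) \<Rightarrow> complex" where
  "inner_H \<phi> \<chi> = (\<Sum>n\<in>Hidx. cnj (\<phi> n) * \<chi> n)"

definition unit_H :: "(int \<Rightarrow> complex) \<Rightarrow> bool" where
  "unit_H \<chi> \<longleftrightarrow> inH1 \<chi> \<and> inner_H \<chi> \<chi> = 1"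

definition bcoef :: "real \<Rightarrow> int \<Rightarrow> complex" where
  "bcoef k n = (if n \<in> {0, 1} then complex_of_real (sqrt (1 + real_of_int (n * (n - 1)) / k)) else 0)"

text \<open>x_+ psi_n = b_{n+1} psi_{n+1}, x_- psi_n = b_n psi_{n-1}, on coefficients.\<close>
definition xplus :: "real \<Rightarrow> (int \<Rightarrow> complex) \<Rightarrow> (int \<Rightarrow> complex)" where
  "xplus k \<chi> = (\<lambda>n. bcoef k n * \<chi> (n - 1))"

definition xminus :: "real \<Rightarrow> (int \<Rightarrow> complex) \<Rightarrow> (int \<Rightarrow> complex)" where
  "xminus k \<chi> = (\<lambda>n. bcoef k (n + 1) * \<chi> (n + 1))"

definition x1op :: "real \<Rightarrow> (int \<Rightarrow> complex) \<Rightarrow> (int \<Rightarrow> complex)" where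
  "x1op k \<chi> = (\<lambda>n. (xplus k \<chi> n + xminus k \<chi> n) / 2)"

definition x2op :: "real \<Rightarrow> (int \<Rightarrow> complex) \<Rightarrow> (int \<Rightarrow> complex)" where
  "x2op k \<chi> = (\<lambda>n. (xplus k \<chi> n - xminus k \<chi> n) / (2 * \<i>))"

definition xsqop :: "real \<Rightarrow> (int \<Rightarrow> complex) \<Rightarrow> (int \<Rightarrow> complex)" where
  "xsqop k \<chi> = (\<lambda>n. x1op k (x1op k \<chi>) n + x2op k (x2op k \<chi>) n)"

definition expect :: "((int \<Rightarrow> complex) \<Rightarrow> (int \<Rightarrow> complex)) \<Rightarrow> (int \<Rightarrow> complex) \<Rightarrow> complex" where
  "expect A \<chi> = inner_H \<chi> (A \<chi>)"

text \<open>(Delta x)^2 = <x^2> - <x_1>^2 - <x_2>^2 (a complex number that is real for unit chi).\<close>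
definition uncert :: "real \<Rightarrow> (int \<Rightarrow> complex) \<Rightarrow> complex" where
  "uncert k \<chi> = expect (xsqop k) \<chi> - (expect (x1op k) \<chi>)\<^sup>2 - (expect (x2op k) \<chi>)\<^sup>2"

definition chi_min :: "int \<Rightarrow> complex" where
  "chi_min n = (if n = -1 \<or> n = 1 then complex_of_real (sqrt 5 / 4)
                else if n = 0 then complex_of_real (sqrt (3/8)) else 0)"

end

theory Submission imports Defs begin

text \<open>Only b_0 = b_1 = 1 enter on H_1. The expectation of x_- is the
conjugate of that of x_+, hence <x_1>^2 + <x_2>^2 = |<x_+>|^2, and a state with coefficients
a, b, c at psi_{-1}, psi_0, psi_1 has uncertainty
  (|a|^2 + |c|^2)/2 + |b|^2 - |<x_+>|^2,  where  <x_+> = cnj b * a + cnj c * b.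
Bounding |<x_+>| by |b| (|a| + |c|) and using |a|^2 + |b|^2 + |c|^2 = 1 leaves
  7/32 + 2 (|b|^2 - 3/8)^2 + |b|^2 (|a| - |c|)^2,
which equals 7/32 exactly when |b|^2 = 3/8 and |a| = |c|, as for chi_min.\<close>

lemma bcoef_simps [simp]:
  "bcoef k 0 = 1" "bcoef k 1 = 1" "bcoef k (-1) = 0" "bcoef k 2 = 0" "bcoef k (-2) = 0"
  by (simp_all add: bcoef_def)

lemma sum_Hidx: "(\<Sum>n\<in>Hidx. f n) = f (-1) + f 0 + f 1"
  by (simp add: Hidx_def add.assoc)

lemma cnj_mult_self: "cnj z * z = complex_of_real (cmod z ^ 2)"
  by (metis complex_norm_square mult.commute of_real_power)

lemma inner_H_self:
  "inner_H \<chi> \<chi> = complex_of_real (cmod (\<chi> (-1)) ^ 2 + cmod (\<chi> 0) ^ 2 + cmod (\<chi> 1) ^ 2)"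
  unfolding inner_H_def sum_Hidx by (simp add: cnj_mult_self)

lemma inH1_outside:
  assumes "inH1 \<chi>"
  shows "\<chi> (-2) = 0" "\<chi> 2 = 0"
  using assms by (auto simp: inH1_def Hidx_def)

lemma expect_xplus:
  "inH1 \<chi> \<Longrightarrow> expect (xplus k) \<chi> = cnj (\<chi> 0) * \<chi> (-1) + cnj (\<chi> 1) * \<chi> 0"
  by (simp add: expect_def inner_H_def sum_Hidx xplus_def inH1_outside)

lemma expect_xminus:
  "inH1 \<chi> \<Longrightarrow> expect (xminus k) \<chi> = cnj (expect (xplus k) \<chi>)"
  by (simp add: expect_xplus) (simp add: expect_def inner_H_def sum_Hidx xminus_def inH1_outside)

lemma expect_xsqop:
  assumes "inH1 \<chi>"
  shows "expect (xsqop k) \<chi>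
    = complex_of_real ((cmod (\<chi> (-1)) ^ 2 + cmod (\<chi> 1) ^ 2) / 2 + cmod (\<chi> 0) ^ 2)"
  using assms
  by (simp add: expect_def inner_H_def sum_Hidx xsqop_def x1op_def x2op_def xplus_def xminus_def
      inH1_outside field_simps complex_norm_square del: of_real_power)

lemma expect_x1op: "expect (x1op k) \<chi> = (expect (xplus k) \<chi> + expect (xminus k) \<chi>) / 2"
  by (simp add: expect_def inner_H_def x1op_def sum_Hidx field_simps)

lemma expect_x2op: "expect (x2op k) \<chi> = (expect (xplus k) \<chi> - expect (xminus k) \<chi>) / (2 * \<i>)"
  by (simp add: expect_def inner_H_def x2op_def sum_Hidx field_simps)

lemma uncert_eq:
  assumes "inH1 \<chi>"
  shows "uncert k \<chi> = expect (xsqop k) \<chi> - complex_of_real (cmod (expect (xplus k) \<chi>) ^ 2)"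
proof -
  define p where "p = expect (xplus k) \<chi>"
  have "(expect (x1op k) \<chi>)\<^sup>2 + (expect (x2op k) \<chi>)\<^sup>2 = p * cnj p"
    unfolding expect_x1op expect_x2op expect_xminus[OF assms] p_def[symmetric]
    by (simp add: field_simps power2_eq_square)
  then show ?thesis
    unfolding uncert_def p_def complex_norm_square by (simp add: algebra_simps)
qed

lemma uncert_inH1:
  assumes "inH1 \<chi>"
  shows "uncert k \<chi> = complex_of_real ((cmod (\<chi> (-1)) ^ 2 + cmod (\<chi> 1) ^ 2) / 2
    + cmod (\<chi> 0) ^ 2 - cmod (expect (xplus k) \<chi>) ^ 2)"
  by (simp add: uncert_eq expect_xsqop assms)

lemma norm_expect_xplus_le:
  assumes "inH1 \<chi>"
  shows "cmod (expect (xplus k) \<chi>) \<le> cmod (\<chi> 0) * (cmod (\<chi> (-1)) + cmod (\<chi> 1))"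
  using norm_triangle_ineq[of "cnj (\<chi> 0) * \<chi> (-1)" "cnj (\<chi> 1) * \<chi> 0"]
  by (simp add: expect_xplus assms norm_mult algebra_simps)

lemma uncert_sum_of_squares:
  fixes a b c :: real
  assumes "a\<^sup>2 + b\<^sup>2 + c\<^sup>2 = 1"
  shows "(a\<^sup>2 + c\<^sup>2) / 2 + b\<^sup>2 - (b * (a + c))\<^sup>2 = 7/32 + 2 * (b\<^sup>2 - 3/8)\<^sup>2 + b\<^sup>2 * (a - c)\<^sup>2"
proof -
  have "(b * (a + c))\<^sup>2 = 2 * b\<^sup>2 * (a\<^sup>2 + c\<^sup>2) - b\<^sup>2 * (a - c)\<^sup>2"
    by (simp add: power2_eq_square algebra_simps)
  moreover have "a\<^sup>2 + c\<^sup>2 = 1 - b\<^sup>2" using assms by simp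
  ultimately have "(a\<^sup>2 + c\<^sup>2) / 2 + b\<^sup>2 - (b * (a + c))\<^sup>2
      = (1 - b\<^sup>2) / 2 + b\<^sup>2 - 2 * b\<^sup>2 * (1 - b\<^sup>2) + b\<^sup>2 * (a - c)\<^sup>2"
    by (simp only:)
  also have "\<dots> = 7/32 + 2 * (b\<^sup>2 - 3/8)\<^sup>2 + b\<^sup>2 * (a - c)\<^sup>2"
    by (simp add: power2_eq_square field_simps)
  finally show ?thesis .
qed

lemma uncert_ge_7_32:
  assumes "unit_H \<chi>"
  shows "7/32 \<le> Re (uncert k \<chi>)"
proof -
  define a b c where "a = cmod (\<chi> (-1))" and "b = cmod (\<chi> 0)" and "c = cmod (\<chi> 1)"
  have inH: "inH1 \<chi>" and norm1: "a\<^sup>2 + b\<^sup>2 + c\<^sup>2 = 1"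
    using assms of_real_eq_1_iff by (fastforce simp: unit_H_def inner_H_self a_def b_def c_def)+
  have "cmod (expect (xplus k) \<chi>) ^ 2 \<le> (b * (a + c))\<^sup>2"
    using norm_expect_xplus_le[OF inH] unfolding a_def b_def c_def by (simp add: power_mono)
  then have "(a\<^sup>2 + c\<^sup>2) / 2 + b\<^sup>2 - (b * (a + c))\<^sup>2 \<le> Re (uncert k \<chi>)"
    by (simp add: uncert_inH1[OF inH] a_def b_def c_def)
  moreover have "7/32 \<le> (a\<^sup>2 + c\<^sup>2) / 2 + b\<^sup>2 - (b * (a + c))\<^sup>2"
    unfolding uncert_sum_of_squares[OF norm1] by simp
  ultimately show ?thesis by linarith
qed

lemma chi_min_values:
  "chi_min (-1) = complex_of_real (sqrt 5 / 4)" "chi_min 1 = complex_of_real (sqrt 5 / 4)"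
  "chi_min 0 = complex_of_real (sqrt (3/8))"
  by (simp_all add: chi_min_def)

lemma inH1_chi_min: "inH1 chi_min"
  by (auto simp: inH1_def Hidx_def chi_min_def)

lemma unit_H_chi_min: "unit_H chi_min"
proof -
  have "sqrt 5 ^ 2 = 5" "sqrt (3/8) ^ 2 = 3/8"
    by simp_all
  then show ?thesis
    by (simp add: unit_H_def inH1_chi_min inner_H_self chi_min_values power_divide)
qed

lemma uncert_chi_min: "uncert k chi_min = 7/32"
proof -
  have sqrt_squares: "sqrt 5 ^ 2 = 5" "sqrt (3/8) ^ 2 = 3/8"
    by simp_all
  have "expect (xplus k) chi_min = complex_of_real (2 * sqrt (3/8) * (sqrt 5 / 4))"
    by (simp add: expect_xplus inH1_chi_min chi_min_values)
  then have "cmod (expect (xplus k) chi_min) = 2 * sqrt (3/8) * (sqrt 5 / 4)"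
    by (simp only: norm_of_real) simp
  moreover have "(2 * sqrt (3/8) * (sqrt 5 / 4)) ^ 2 = (15/32 :: real)"
    unfolding power_mult_distrib power_divide sqrt_squares by simp
  ultimately have "cmod (expect (xplus k) chi_min) ^ 2 = 15/32"
    by (simp only:)
  moreover have "cmod (chi_min (-1)) ^ 2 = 5/16" "cmod (chi_min 1) ^ 2 = 5/16"
    "cmod (chi_min 0) ^ 2 = 3/8"
    by (simp_all add: chi_min_values power_divide sqrt_squares)
  ultimately show ?thesis
    unfolding uncert_inH1[OF inH1_chi_min] by (simp only:) simp
qed

theorem mainTheorem6:
  fixes k :: real
  assumes "k > 0"
  shows "unit_H chi_min \<and> uncert k chi_min = 7/32
         \<and> (\<forall>\<chi>. unit_H \<chi> \<longrightarrow> uncert k \<chi> \<in> \<real> \<and> 7/32 \<le> Re (uncert k \<chi>))"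
proof -
  have "uncert k \<chi> \<in> \<real>" if "unit_H \<chi>" for \<chi>
    using that by (simp add: unit_H_def uncert_inH1)
  then show ?thesis
    using unit_H_chi_min uncert_chi_min uncert_ge_7_32 by blast
qed

end
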